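(* Fix $L\ge1$. (a) $(2^\omega,(g^L_n|_{\mathbb{D}^L_n})_{n\in\omega})$ is a strongly complex situation. (b) If $s\in\omega^{<\omega}$ is strictly increasing with $2\le|s|\le L$, $\alpha\in\mathbb{D}^L_{s(|s|-1)}$, and $g_s(\alpha)$, $g_{s^-}(\alpha)$ are both defined, then $g_s(\alpha)\ne g_{s^-}(\alpha)$. (c) If $s\in\omega^{<\omega}$ is strictly increasing with $|s|=L+1$ and $g_s(\alpha)$, $g_{s^-}(\alpha)$ are both defined, then $g_s(\alpha)=g_{s^-}(\alpha)$.
   Context: Let $\psi:\omega\to2^{<\omega}$ enumerate finite binary sequences by length then lexicographically. Let $q_0=0$, $q_{n+1}=3\cdot2^{q_n}$, $t_n:=\psi(n)0^{2^{q_n}-|\psi(n)|}$, $S_n:=\{2^{q_n}j:j\ge1\}$, $N_t=\{\alpha\in 2^\omega:t\subseteq\alpha\}$. Define $\theta$ on $\{j\ge1\}$ depending on $L$: if $L=1$, $\theta(j)=2j+1$; if $L\ge2$, with $P_L:=\{2^p3^l:p\in\omega,l<L-2\}$ and $M_L:=\{2^{31}\cdot3\cdot k:k\ge1,k\notin P_L\}$, $\theta(j)=3j$ if $j\notin M_L\cup(M_L+1)$, $3j+3$ if $j\in M_L$, $3j-3$ if $j\in M_L+1$. Let $\theta_n(k)=k$ for $k\notin S_n$ and $\theta_n(2^{q_n}j)=2^{q_n}\theta(j)$. Define $g_n=g^L_n:N_{t_n0}\to N_{t_n1}$ by $g_n(\alpha)(k)=1$ if $k=2^{q_n}$, $g_n(\alpha)(k)=\alpha(\theta_n(k))$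 otherwise. Let $\mathbb{D}^1_n:=N_{t_n0}$ and for $L\ge2$, $\mathbb{D}^L_n:=\{\alpha\in N_{t_n0}:\forall m\le n\ \alpha(2^{q_n}3^m)\ne\alpha(2^{q_n}3^{m+1})\}$. For $s\in\omega^{<\omega}$ nonempty, $g_s:=g_{s(0)}\circ\dots\circ g_{s(|s|-1)}$ (partial composition) and $s^-:=(s(0),\dots,s(|s|-2))$. A strongly complex situation is $(X,(f_n))$ with $X$ a nonempty zero-dimensional perfect Polish space, each $f_n$ a partial continuous open map with clopen domain and range, $\Delta(X)\subseteq\overline{\bigcup_n\mathrm{Graph}(f_n)}\setminus\bigcup_n\mathrm{Graph}(f_n)$, and the restriction of any $f_n$ to any nonempty open subset of its domain not countable-to-one. *)

theory Defs
  imports "HOL-Analysis.Analysis"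
begin

definition Polish_space :: "'a topology \<Rightarrow> bool" where
  "Polish_space X \<longleftrightarrow> completely_metrizable_space X \<and> separable_space X"

definition perfect_top :: "'a topology \<Rightarrow> bool" where
  "perfect_top X \<longleftrightarrow> X derived_set_of topspace X = topspace X"

text \<open>A partial map on X given by its domain D and a function f (relevant on D only):
  continuous and open, with clopen domain and clopen range.\<close>
definition partial_cont_open_map :: "'a topology \<Rightarrow> 'a set \<Rightarrow> ('a \<Rightarrow> 'a) \<Rightarrow> bool" where
  "partial_cont_open_map X D f \<longleftrightarrow>
     closedin X D \<and> openin X D \<and>
     closedin X (f ` D) \<and> openin X (f ` D) \<and>
     continuous_map (subtopology X D) X f \<and>
     open_map (subtopology X D) X f"

definition graph_on :: "'a set \<Rightarrow> ('a \<Rightarrow> 'a) \<Rightarrow> ('a \<times> 'a) set" where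
  "graph_on D f = {(x, f x) | x. x \<in> D}"

definition strongly_complex_situation ::
    "'a topology \<Rightarrow> (nat \<Rightarrow> 'a set) \<Rightarrow> (nat \<Rightarrow> 'a \<Rightarrow> 'a) \<Rightarrow> bool" where
  "strongly_complex_situation X D f \<longleftrightarrow>
     topspace X \<noteq> {} \<and> X dim_le 0 \<and> perfect_top X \<and> Polish_space X \<and>
     (\<forall>n. partial_cont_open_map X (D n) (f n)) \<and>
     (\<lambda>x. (x, x)) ` topspace X \<subseteq>
        (prod_topology X X) closure_of (\<Union>n. graph_on (D n) (f n)) - (\<Union>n. graph_on (D n) (f n)) \<and>
     (\<forall>n U. openin X U \<and> U \<noteq> {} \<and> U \<subseteq> D n \<longrightarrow>
        \<not> (\<forall>y. countable {x \<in> U. f n x = y}))"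

definition cantor :: "(nat \<Rightarrow> bool) topology" where
  "cantor = product_topology (\<lambda>_. discrete_topology UNIV) UNIV"

text \<open>Basic clopen set N_t; True = 1, False = 0.\<close>
definition Nbhd :: "bool list \<Rightarrow> (nat \<Rightarrow> bool) set" where
  "Nbhd t = {\<alpha>. \<forall>i < length t. \<alpha> i = t ! i}"

fun bin_tail :: "nat \<Rightarrow> bool list" where
  "bin_tail m = (if m \<le> 1 then [] else bin_tail (m div 2) @ [odd m])"

text \<open>psi enumerates finite binary sequences by length, then lexicographically:
  psi n is the binary expansion of n+1 with its leading 1 removed.\<close>
definition psi :: "nat \<Rightarrow> bool list" where
  "psi n = bin_tail (Suc n)"

fun q :: "nat \<Rightarrow> nat" where
  "q 0 = 0"
| "q (Suc n) = 3 * 2 ^ q n"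

definition tt :: "nat \<Rightarrow> bool list" where
  "tt n = psi n @ replicate (2 ^ q n - length (psi n)) False"

definition S :: "nat \<Rightarrow> nat set" where
  "S n = {2 ^ q n * j | j. j \<ge> 1}"

definition P :: "nat \<Rightarrow> nat set" where
  "P L = {2 ^ p * 3 ^ l | p l. l < L - 2}"

definition M :: "nat \<Rightarrow> nat set" where
  "M L = {2 ^ 31 * 3 * k | k. k \<ge> 1 \<and> k \<notin> P L}"

definition theta :: "nat \<Rightarrow> nat \<Rightarrow> nat" where
  "theta L j =
     (if L = 1 then 2 * j + 1
      else if j \<in> M L then 3 * j + 3
      else if j \<in> (\<lambda>m. m + 1) ` M L then 3 * j - 3
      else 3 * j)"

definition theta_n :: "nat \<Rightarrow> nat \<Rightarrow> nat \<Rightarrow> nat" where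
  "theta_n L n k = (if k \<in> S n then 2 ^ q n * theta L (k div 2 ^ q n) else k)"

text \<open>g^L_n, as a total function; its domain is Nbhd (tt n @ [False]).\<close>
definition g :: "nat \<Rightarrow> nat \<Rightarrow> (nat \<Rightarrow> bool) \<Rightarrow> (nat \<Rightarrow> bool)" where
  "g L n \<alpha> = (\<lambda>k. if k = 2 ^ q n then True else \<alpha> (theta_n L n k))"

definition D :: "nat \<Rightarrow> nat \<Rightarrow> (nat \<Rightarrow> bool) set" where
  "D L n = (if L = 1 then Nbhd (tt n @ [False])
            else {\<alpha> \<in> Nbhd (tt n @ [False]).
                    \<forall>m \<le> n. \<alpha> (2 ^ q n * 3 ^ m) \<noteq> \<alpha> (2 ^ q n * 3 ^ Suc m)})"

text \<open>g_n as a partial map with domain N_{t_n 0}.\<close>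
definition g_part :: "nat \<Rightarrow> nat \<Rightarrow> (nat \<Rightarrow> bool) \<Rightarrow> (nat \<Rightarrow> bool) option" where
  "g_part L n \<alpha> = (if \<alpha> \<in> Nbhd (tt n @ [False]) then Some (g L n \<alpha>) else None)"

text \<open>g_s = g_{s(0)} o ... o g_{s(|s|-1)} (partial composition; g_{s(|s|-1)} applied first).\<close>
definition g_seq :: "nat \<Rightarrow> nat list \<Rightarrow> (nat \<Rightarrow> bool) \<Rightarrow> (nat \<Rightarrow> bool) option" where
  "g_seq L s \<alpha> = foldr (\<lambda>n acc. Option.bind acc (g_part L n)) s (Some \<alpha>)"

end

theory Submission
  imports Defs
begin

text \<open>
  g_s(\<alpha>) reads at coordinate k either a constant 1 or \<alpha>(r), where r arises from k by
  applying \<theta>_s(0), ..., \<theta>_s(|s|-1) in turn. For c < b, \<theta>_c multiplies indices in S_b by 3,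
  except that it is off by \<plusminus>3\<cdot>2^q_c at the indices 2^q_c \<cdot> j with j \<in> M_L \<union> (M_L + 1).

  (b) For increasing s with |s| \<le> L and b = s(|s|-1), the index 2^q_b is carried to
  2^q_b \<cdot> 3^(|s|-1), all cofactors met on the way lying in P_L. There g_(s^-)(\<alpha>) reads
  \<alpha>(2^q_b \<cdot> 3^(|s|-1)) while g_s(\<alpha>) reads \<alpha>(2^q_b \<cdot> 3^|s|), and these differ on the domain D L b.

  (c) For |s| = L + 1 and a = s(L-1), an index reaching S_a is divisible by 3^(L-1). If the last
  step took it into S_b, its cofactor would be a multiple of 2^31\<cdot>3 outside P_L, i.e. in M_L,
  which parity forbids; the only escape, q_b - q_a < 31, forces s = (0,1,2), whose domains are
  disjoint. So g_b only changes coordinates that g_(s^-) never reads.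

  (a) g_n is continuous and open because \<theta>_n is injective and increasing, and its fibres are
  uncountable because it never reads the coordinates 2^q_n \<cdot> (6r+4).
\<close>

section \<open>Index arithmetic\<close>

lemma pow3_dvd_pow2_mult_iff: "(3::nat) ^ m dvd 2 ^ e * y \<longleftrightarrow> 3 ^ m dvd y"
proof -
  have "coprime ((3::nat) ^ m) (2 ^ e)" by simp
  then show ?thesis by (rule coprime_dvd_mult_right_iff)
qed

lemma q_less_Suc: "q n < q (Suc n)"
  using less_exp[of "q n"] by (simp del: less_exp)

lemma strict_mono_q: "strict_mono q"
  by (rule strict_monoI_Suc) (rule q_less_Suc)

lemma q_1: "q 1 = 3" and q_2: "q 2 = 24" and q_3: "q 3 = 3 * 2 ^ 24"
proof -
  show "q 1 = 3" by (simp add: One_nat_def)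
  moreover have "q 2 = 3 * 2 ^ q 1" using q.simps(2)[of 1] by (simp only: Suc_1)
  ultimately show "q 2 = 24" by simp
  moreover have "q 3 = q (Suc 2)" by simp
  moreover have "q (Suc 2) = 3 * 2 ^ q 2" by (rule q.simps(2))
  ultimately show "q 3 = 3 * 2 ^ 24" by simp
qed

lemma q_add_31_le:
  assumes "1 \<le> a" "a < b" "\<not> (a = 1 \<and> b = 2)"
  shows "q a + 31 \<le> q b"
proof (cases "a = 1")
  case True
  then have "3 \<le> b" using assms by auto
  then have "q 3 \<le> q b" using strict_mono_q by (simp add: strict_mono_less_eq)
  then show ?thesis using True q_1 q_3 by simp
next
  case False
  then have "2 \<le> a" using assms by simp
  then have "24 \<le> q a" using strict_mono_q q_2 by (metis strict_mono_less_eq)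
  moreover have "q a < 2 ^ q a" by simp
  moreover have "q (Suc a) \<le> q b"
    using assms strict_mono_q by (simp add: strict_mono_less_eq del: q.simps)
  ultimately show ?thesis unfolding q.simps by linarith
qed

lemma mem_S_iff: "x \<in> S n \<longleftrightarrow> x \<noteq> 0 \<and> 2 ^ q n dvd x"
  unfolding S_def by (auto elim!: dvdE)

lemma S_antimono: "a \<le> b \<Longrightarrow> S b \<subseteq> S a"
proof
  fix x assume "a \<le> b" "x \<in> S b"
  then have "(2::nat) ^ q a dvd 2 ^ q b" "2 ^ q b dvd x" "x \<noteq> 0"
    using strict_mono_q by (auto simp: mem_S_iff strict_mono_less_eq le_imp_power_dvd)
  then show "x \<in> S a" by (auto simp: mem_S_iff intro: dvd_trans)
qed

lemma S_ge: "x \<in> S n \<Longrightarrow> 2 ^ q n \<le> x"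
  by (auto simp: mem_S_iff dest: dvd_imp_le)

lemma mult_in_S_imp_even:
  assumes "q c < q a" "2 ^ q c * y \<in> S a"
  shows "even y"
proof -
  have "(2::nat) ^ Suc (q c) dvd 2 ^ q c * y"
    using assms by (meson Suc_leI dvd_trans le_imp_power_dvd mem_S_iff)
  then show ?thesis by simp
qed

lemma theta_n_mult: "1 \<le> j \<Longrightarrow> theta_n L n (2 ^ q n * j) = 2 ^ q n * theta L j"
  by (simp add: theta_n_def mem_S_iff)

lemma theta_n_notin_S: "k \<notin> S n \<Longrightarrow> theta_n L n k = k"
  by (simp add: theta_n_def)

lemma mem_SE:
  assumes "k \<in> S n"
  obtains j where "k = 2 ^ q n * j" "1 \<le> j"
  using assms unfolding S_def by blast

lemma M_dvd: "m \<in> M L \<Longrightarrow> 2 dvd m \<and> 3 dvd m"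
  unfolding M_def by auto

lemma M_ge: "m \<in> M L \<Longrightarrow> 6 \<le> m"
  unfolding M_def by auto

definition swap_M :: "nat \<Rightarrow> nat \<Rightarrow> nat" where
  "swap_M L j = (if j \<in> M L then j + 1 else if j - 1 \<in> M L then j - 1 else j)"

lemma theta_eq_swap_M: "L \<noteq> 1 \<Longrightarrow> theta L j = 3 * swap_M L j"
proof -
  assume "L \<noteq> 1"
  have "j \<in> (\<lambda>m. m + 1) ` M L \<longleftrightarrow> j - 1 \<in> M L"
    using M_ge[of "j - 1" L] by (force simp: image_iff)
  with \<open>L \<noteq> 1\<close> show ?thesis by (simp add: theta_def swap_M_def diff_mult_distrib2)
qed

lemma swap_M_swap_M: "swap_M L (swap_M L j) = j"
  using M_dvd[of j L] M_dvd[of "j + 1" L] M_dvd[of "j - 1" L] M_ge[of "j - 1" L]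
  by (auto simp: swap_M_def)

lemma inj_theta: "inj (theta L)"
proof (cases "L = 1")
  case False
  have "inj (swap_M L)" by (metis injI swap_M_swap_M)
  then show ?thesis using False by (simp add: inj_def theta_eq_swap_M)
qed (simp add: inj_def theta_def)

lemma le_theta: "j \<le> theta L j"
  using M_ge[of "j - 1" L] by (cases "L = 1") (auto simp: theta_eq_swap_M swap_M_def theta_def)

lemma theta_even_imp_notin_M: "L \<noteq> 1 \<Longrightarrow> even (theta L j) \<Longrightarrow> j \<notin> M L"
  using M_dvd by (fastforce simp: theta_eq_swap_M swap_M_def)

lemma theta_eq_triple: "L \<noteq> 1 \<Longrightarrow> j \<notin> M L \<Longrightarrow> j - 1 \<notin> M L \<Longrightarrow> theta L j = 3 * j"
  by (simp add: theta_eq_swap_M swap_M_def)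

lemma pred_notin_M_if_3_dvd: "3 dvd j \<Longrightarrow> j - 1 \<notin> M L"
proof
  assume "3 dvd j" "j - 1 \<in> M L"
  then have "3 dvd j - 1" "1 \<le> j" using M_dvd[of "j - 1" L] M_ge[of "j - 1" L] by auto
  then have "3 dvd j - (j - 1)" using \<open>3 dvd j\<close> dvd_diff_nat by blast
  with \<open>1 \<le> j\<close> show False by simp
qed

lemma pred_notin_M_if_even: "even j \<Longrightarrow> j - 1 \<notin> M L"
proof
  assume "even j" "j - 1 \<in> M L"
  then have "even (j - 1)" "1 \<le> j" using M_dvd[of "j - 1" L] M_ge[of "j - 1" L] by auto
  with \<open>even j\<close> show False by simp
qed

lemma odd_notin_M: "odd j \<Longrightarrow> j \<notin> M L"
  using M_dvd by blast

lemma theta_ne_6_mult_plus_4: "theta L j \<noteq> 6 * r + 4"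
proof (cases "L = 1")
  case False
  then show ?thesis by (simp add: theta_eq_swap_M) presburger
qed (simp add: theta_def, presburger)

lemma theta_n_ne_6_mult_plus_4: "theta_n L n k \<noteq> 2 ^ q n * (6 * r + 4)"
proof (cases "k \<in> S n")
  case True
  then obtain j where "k = 2 ^ q n * j" "1 \<le> j" by (rule mem_SE)
  then show ?thesis using theta_ne_6_mult_plus_4[of L j r] by (simp add: theta_n_mult)
next
  case False
  then show ?thesis by (auto simp: theta_n_notin_S mem_S_iff)
qed

lemma le_theta_n: "k \<le> theta_n L n k"
proof (cases "k \<in> S n")
  case True
  then obtain j where "k = 2 ^ q n * j" "1 \<le> j" by (rule mem_SE)
  then show ?thesis using le_theta[of j L] by (simp add: theta_n_mult)
qed (simp add: theta_n_notin_S)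

lemma inj_theta_n: "inj (theta_n L n)"
proof (rule injI)
  fix k k' assume eq: "theta_n L n k = theta_n L n k'"
  have in_S_iff: "theta_n L n x \<in> S n \<longleftrightarrow> x \<in> S n" for x
  proof (cases "x \<in> S n")
    case True
    then obtain j where "x = 2 ^ q n * j" "1 \<le> j" by (rule mem_SE)
    then show ?thesis using le_theta[of j L] by (simp add: theta_n_mult mem_S_iff)
  qed (simp add: theta_n_notin_S)
  show "k = k'"
  proof (cases "k \<in> S n")
    case True
    then have "k' \<in> S n" using eq in_S_iff by metis
    obtain j j' where "k = 2 ^ q n * j" "1 \<le> j" "k' = 2 ^ q n * j'" "1 \<le> j'"
      using mem_SE[OF \<open>k \<in> S n\<close>] mem_SE[OF \<open>k' \<in> S n\<close>] by metis
    then show ?thesis using eq inj_theta[of L] by (simp add: theta_n_mult inj_eq)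
  next
    case False
    then have "k' \<notin> S n" using eq in_S_iff by metis
    then show ?thesis using eq False by (simp add: theta_n_notin_S)
  qed
qed

section \<open>Coordinates read by compositions\<close>

fun source_coord :: "nat \<Rightarrow> nat list \<Rightarrow> nat \<Rightarrow> nat option" where
  "source_coord L [] k = Some k"
| "source_coord L (a # s) k = (if k = 2 ^ q a then None else source_coord L s (theta_n L a k))"

lemma source_coord_snoc:
  "source_coord L (s @ [c]) k = Option.bind (source_coord L s k) (source_coord L [c])"
  by (induction s arbitrary: k) auto

lemma g_seq_Cons: "g_seq L (a # s) \<alpha> = Option.bind (g_seq L s \<alpha>) (g_part L a)"
  by (simp add: g_seq_def)

lemma g_seq_apply:
  "g_seq L s \<gamma> = Some \<beta> \<Longrightarrow> \<beta> k = (case source_coord L s k of None \<Rightarrow> True | Some p \<Rightarrow> \<gamma> p)"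
proof (induction s arbitrary: \<beta> k)
  case Nil
  then show ?case by (simp add: g_seq_def)
next
  case (Cons a s)
  then obtain \<delta> where "g_seq L s \<gamma> = Some \<delta>" "\<beta> = g L a \<delta>"
    by (auto simp: g_seq_Cons g_part_def split: Option.bind_splits if_splits)
  then show ?case using Cons.IH by (simp add: g_def)
qed

lemma g_seq_snoc:
  "\<alpha> \<in> Nbhd (tt b @ [False]) \<Longrightarrow> g_seq L (s @ [b]) \<alpha> = g_seq L s (g L b \<alpha>)"
  by (simp add: g_seq_def g_part_def)

lemma g_seq_snoc_domain:
  assumes "g_seq L (s @ [b]) \<alpha> \<noteq> None"
  shows "\<alpha> \<in> Nbhd (tt b @ [False])"
proof -
  have "foldr (\<lambda>n acc. Option.bind acc (g_part L n)) s None = None" for s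
    by (induction s) auto
  then show ?thesis using assms by (auto simp: g_seq_def g_part_def split: if_splits)
qed

lemma g_notin_S: "p \<notin> S n \<Longrightarrow> g L n \<alpha> p = \<alpha> p"
  by (auto simp: g_def theta_n_notin_S mem_S_iff)

lemma theta_n_into_S:
  assumes "c < a" "theta_n L c k \<in> S a"
  obtains j where "k = 2 ^ q c * j" "1 \<le> j" "even (theta L j)"
proof -
  have qca: "q c < q a" using strict_mono_q assms(1) by (rule strict_monoD)
  have "k \<in> S c"
    using assms S_antimono[of c a] by (cases "k \<in> S c") (auto simp: theta_n_notin_S)
  then obtain j where j: "k = 2 ^ q c * j" "1 \<le> j" by (rule mem_SE)
  then have "even (theta L j)"
    using mult_in_S_imp_even[OF qca] assms(2) by (simp add: theta_n_mult)
  with j that show ?thesis by blast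
qed

lemma pow3_dvd_theta_n:
  assumes "L \<noteq> 1" "c < a" "theta_n L c k \<in> S a" "3 ^ m dvd k"
  shows "3 ^ Suc m dvd theta_n L c k"
proof -
  obtain j where j: "k = 2 ^ q c * j" "1 \<le> j" "even (theta L j)"
    using assms(2,3) by (rule theta_n_into_S)
  have "3 ^ m dvd j" using assms(4) j(1) pow3_dvd_pow2_mult_iff by simp
  show ?thesis
  proof (cases m)
    case 0
    then show ?thesis using assms(1) j by (simp add: theta_n_mult theta_eq_swap_M)
  next
    case (Suc m')
    then have "3 dvd j" using \<open>3 ^ m dvd j\<close> by (simp add: dvd_mult_left)
    then have "theta L j = 3 * j"
      using assms(1) j(3) theta_even_imp_notin_M pred_notin_M_if_3_dvd theta_eq_triple by blast
    then show ?thesis using j \<open>3 ^ m dvd j\<close> by (simp add: theta_n_mult)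
  qed
qed

lemma pow3_dvd_source_coord:
  assumes "L \<noteq> 1"
  shows "sorted_wrt (<) (s @ [a]) \<Longrightarrow> source_coord L s k = Some p \<Longrightarrow> p \<in> S a
    \<Longrightarrow> 3 ^ length s dvd p"
proof (induction s arbitrary: a p rule: rev_induct)
  case (snoc c s)
  obtain p' where p': "source_coord L s k = Some p'" "p = theta_n L c p'"
    using snoc.prems(2) by (auto simp: source_coord_snoc split: Option.bind_splits if_splits)
  have "c < a" "sorted_wrt (<) (s @ [c])" using snoc.prems(1) by (auto simp: sorted_wrt_append)
  obtain j where "p' = 2 ^ q c * j" "1 \<le> j"
    using \<open>c < a\<close> snoc.prems(3) p'(2) by (auto elim: theta_n_into_S)
  then have "p' \<in> S c" by (auto simp: S_def)
  then have "3 ^ length s dvd p'" using snoc.IH \<open>sorted_wrt (<) (s @ [c])\<close> p'(1) by blast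
  then show ?case using pow3_dvd_theta_n[OF assms \<open>c < a\<close>] snoc.prems(3) p'(2) by simp
qed simp

lemma pow2_pow3_notin_M:
  assumes "Suc c < L"
  shows "2 ^ e * 3 ^ c \<notin> M L"
proof
  assume "2 ^ e * 3 ^ c \<in> M L"
  then obtain \<kappa> where \<kappa>: "2 ^ e * 3 ^ c = 2 ^ 31 * 3 * \<kappa>" "\<kappa> \<notin> P L"
    by (auto simp: M_def)
  have "coprime (3::nat) (2 ^ e)" "(3::nat) dvd 2 ^ e * 3 ^ c"
    using \<kappa>(1) by simp_all
  then have "(3::nat) dvd 3 ^ c" by (simp add: coprime_dvd_mult_right_iff)
  then obtain c' where c: "c = Suc c'" by (cases c) auto
  have "coprime ((2::nat) ^ 31) (3 ^ c)"
    by (simp only: coprime_power_left_iff coprime_power_right_iff) simp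
  moreover have "(2::nat) ^ 31 dvd 3 ^ c * 2 ^ e"
    using \<kappa>(1) by (simp add: mult.commute)
  ultimately have "(2::nat) ^ 31 dvd 2 ^ e" by (simp add: coprime_dvd_mult_right_iff)
  then have "31 \<le> e" by (rule power_dvd_imp_le) simp
  then obtain e' where e: "e = 31 + e'" using le_Suc_ex by blast
  have "\<kappa> = 2 ^ e' * 3 ^ c'" using \<kappa>(1) by (simp add: c e power_add)
  moreover have "c' < L - 2" using assms c by simp
  ultimately have "\<kappa> \<in> P L" by (auto simp: P_def)
  with \<kappa>(2) show False ..
qed

lemma theta_n_pow3:
  assumes "a < b" "Suc c < L"
  shows "theta_n L a (2 ^ q b * 3 ^ c) = 2 ^ q b * 3 ^ Suc c"
proof -
  define j where "j = (2::nat) ^ (q b - q a) * 3 ^ c"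
  have qab: "q a < q b" using strict_mono_q assms(1) by (rule strict_monoD)
  then have "(2::nat) ^ q b = 2 ^ q a * 2 ^ (q b - q a)" by (simp add: power_add[symmetric])
  then have split: "2 ^ q b * 3 ^ c = 2 ^ q a * j" by (simp add: j_def)
  have "even j" "1 \<le> j" using qab by (simp_all add: j_def)
  moreover have "j \<notin> M L" using pow2_pow3_notin_M[OF assms(2)] by (simp add: j_def)
  moreover have "L \<noteq> 1" using assms(2) by simp
  ultimately have "theta L j = 3 * j" using pred_notin_M_if_even theta_eq_triple by blast
  then show ?thesis using \<open>1 \<le> j\<close> by (simp add: split theta_n_mult j_def)
qed

lemma source_coord_pow3:
  "(\<forall>x\<in>set s. x < b) \<Longrightarrow> c + length s < L
    \<Longrightarrow> source_coord L s (2 ^ q b * 3 ^ c) = Some (2 ^ q b * 3 ^ (c + length s))"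
proof (induction s arbitrary: c)
  case (Cons a s)
  have "(2::nat) ^ q a < 2 ^ q b" using strict_mono_q Cons.prems(1) by (simp add: strict_mono_less)
  also have "\<dots> \<le> 2 ^ q b * 3 ^ c" by simp
  finally have "2 ^ q b * 3 ^ c \<noteq> (2::nat) ^ q a" by simp
  moreover have "theta_n L a (2 ^ q b * 3 ^ c) = 2 ^ q b * 3 ^ Suc c"
    using Cons.prems by (intro theta_n_pow3) auto
  ultimately show ?case using Cons.IH[of "Suc c"] Cons.prems by simp
qed simp

lemma theta_n_own_pow3:
  assumes "L \<noteq> 1" "1 \<le> m"
  shows "theta_n L b (2 ^ q b * 3 ^ m) = 2 ^ q b * 3 ^ Suc m"
proof -
  have "3 dvd (3::nat) ^ m" using assms(2) by (simp add: dvd_power)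
  then have "theta L (3 ^ m) = 3 * 3 ^ m"
    using assms(1) odd_notin_M pred_notin_M_if_3_dvd theta_eq_triple by simp
  then show ?thesis by (simp add: theta_n_mult)
qed

lemma theta_n_far_notin_S:
  assumes "2 \<le> L" "a < b" "q a + 31 \<le> q b" "3 ^ (L - 1) dvd k"
  shows "theta_n L a k \<notin> S b"
proof
  assume into: "theta_n L a k \<in> S b"
  obtain j where j: "k = 2 ^ q a * j" "1 \<le> j" "even (theta L j)"
    using assms(2) into by (rule theta_n_into_S)
  have L1: "L \<noteq> 1" using assms(1) by simp
  have "3 ^ (L - 1) dvd j" using assms(4) j(1) pow3_dvd_pow2_mult_iff by simp
  then have "3 dvd j" using assms(1) by (simp add: dvd_power_iff_le dvd_trans[OF dvd_power[of "L - 1"]])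
  then have "j \<notin> M L" "theta L j = 3 * j"
    using L1 j(3) theta_even_imp_notin_M pred_notin_M_if_3_dvd theta_eq_triple by blast+
  have "(2::nat) ^ q a * 2 ^ 31 dvd 2 ^ q b"
    unfolding power_add[symmetric] using assms(3) by (rule le_imp_power_dvd)
  also have "2 ^ q b dvd 2 ^ q a * (3 * j)"
    using into j(1,2) \<open>theta L j = 3 * j\<close> by (simp add: theta_n_mult mem_S_iff)
  finally have "2 ^ 31 dvd 3 * j" by simp
  moreover have cop: "coprime ((2::nat) ^ 31) 3"
    by (simp only: coprime_power_left_iff) simp
  ultimately have "2 ^ 31 dvd j" by (simp only: coprime_dvd_mult_right_iff)
  then have "2 ^ 31 * 3 dvd j" using \<open>3 dvd j\<close> cop by (rule divides_mult)
  then obtain \<kappa> where \<kappa>: "j = 2 ^ 31 * 3 * \<kappa>" ..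
  have "\<kappa> \<notin> P L"
  proof
    assume "\<kappa> \<in> P L"
    then obtain p l where "\<kappa> = 2 ^ p * 3 ^ l" "l < L - 2" unfolding P_def by blast
    then have "j = 2 ^ (31 + p) * 3 ^ Suc l" by (simp add: \<kappa> power_add)
    then have "(3::nat) ^ (L - 1) dvd 3 ^ Suc l"
      using \<open>3 ^ (L - 1) dvd j\<close> pow3_dvd_pow2_mult_iff by metis
    then have "L - 1 \<le> Suc l" by (rule power_dvd_imp_le) simp
    with \<open>l < L - 2\<close> show False by simp
  qed
  then have "j \<in> M L" using \<kappa> j(2) by (auto simp: M_def)
  with \<open>j \<notin> M L\<close> show False ..
qed

lemma source_coord_in_S_imp_012:
  assumes "1 \<le> L" "sorted_wrt (<) (s @ [b])" "length s = L"
    and "source_coord L s k = Some p" "p \<in> S b"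
  shows "s @ [b] = [0, 1, 2]"
proof -
  obtain s' a where s: "s = s' @ [a]"
    using assms(1,3) by (metis append_butlast_last_id le_zero_eq length_0_conv not_one_le_zero)
  obtain p' where p': "source_coord L s' k = Some p'" "p = theta_n L a p'"
    using assms(4) by (auto simp: s source_coord_snoc split: Option.bind_splits if_splits)
  have "a < b" "sorted_wrt (<) (s' @ [a])" using assms(2) by (auto simp: s sorted_wrt_append)
  obtain j where j: "p' = 2 ^ q a * j" "1 \<le> j" "even (theta L j)"
    using \<open>a < b\<close> assms(5) p'(2) by (auto elim: theta_n_into_S)
  have "L \<noteq> 1" using j(3) by (auto simp: theta_def)
  then have L2: "2 \<le> L" using assms(1) by simp
  have "length s' = L - 1" using assms(3) s by simp
  have "p' \<in> S a" using j by (auto simp: S_def)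
  then have "3 ^ (L - 1) dvd p'"
    using pow3_dvd_source_coord[OF \<open>L \<noteq> 1\<close> \<open>sorted_wrt (<) (s' @ [a])\<close> p'(1)]
      \<open>length s' = L - 1\<close> by simp
  then have "\<not> q a + 31 \<le> q b"
    using theta_n_far_notin_S[OF L2 \<open>a < b\<close>] assms(5) p'(2) by blast
  moreover have "length s' \<le> a"
    using sorted_wrt_less_idx[OF \<open>sorted_wrt (<) (s' @ [a])\<close>, of "length s'"] by simp
  moreover have "1 \<le> a" using \<open>length s' \<le> a\<close> L2 \<open>length s' = L - 1\<close> by simp
  ultimately have ab: "a = 1" "b = 2" using q_add_31_le[of a b] \<open>a < b\<close> by auto
  then have "length s' = 1" using \<open>length s' \<le> a\<close> L2 \<open>length s' = L - 1\<close> by simp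
  moreover have "\<forall>x\<in>set s'. x < a" using \<open>sorted_wrt (<) (s' @ [a])\<close> by (simp add: sorted_wrt_append)
  ultimately show ?thesis using ab by (auto simp: s length_Suc_conv)
qed

lemma g_seq_butlast_neq:
  assumes "sorted_wrt (<) s" "2 \<le> length s" "length s \<le> L" "\<alpha> \<in> D L (last s)"
    and "g_seq L s \<alpha> \<noteq> None" "g_seq L (butlast s) \<alpha> \<noteq> None"
  shows "g_seq L s \<alpha> \<noteq> g_seq L (butlast s) \<alpha>"
proof -
  obtain s' b where s: "s = s' @ [b]"
    using assms(2) by (metis append_butlast_last_id list.size(3) not_numeral_le_zero)
  define m where "m = length s'"
  have "L \<noteq> 1" "1 \<le> m" "m < L" using assms(2,3) by (auto simp: s m_def)
  have "m \<le> b" using sorted_wrt_less_idx[OF assms(1), of m] by (simp add: s m_def)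
  then have \<alpha>: "\<alpha> \<in> Nbhd (tt b @ [False])" "\<alpha> (2 ^ q b * 3 ^ m) \<noteq> \<alpha> (2 ^ q b * 3 ^ Suc m)"
    using assms(4) \<open>L \<noteq> 1\<close> by (auto simp: s D_def)
  obtain \<beta>1 \<beta>2 where \<beta>1: "g_seq L s' (g L b \<alpha>) = Some \<beta>1" and \<beta>2: "g_seq L s' \<alpha> = Some \<beta>2"
    using assms(5,6) by (auto simp: s g_seq_snoc[OF \<alpha>(1)])
  have src: "source_coord L s' (2 ^ q b) = Some (2 ^ q b * 3 ^ m)"
    using source_coord_pow3[of s' b 0 L] assms(1) \<open>m < L\<close> by (simp add: s m_def sorted_wrt_append)
  have "2 ^ q b * 3 ^ m \<noteq> (2::nat) ^ q b" using \<open>1 \<le> m\<close> by simp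
  then have "\<beta>1 (2 ^ q b) = \<alpha> (2 ^ q b * 3 ^ Suc m)"
    using g_seq_apply[OF \<beta>1] src theta_n_own_pow3[OF \<open>L \<noteq> 1\<close> \<open>1 \<le> m\<close>] by (simp add: g_def)
  moreover have "\<beta>2 (2 ^ q b) = \<alpha> (2 ^ q b * 3 ^ m)" using g_seq_apply[OF \<beta>2] src by simp
  ultimately have "\<beta>1 \<noteq> \<beta>2" using \<alpha>(2) by metis
  then show ?thesis using \<beta>1 \<beta>2 by (simp add: s g_seq_snoc[OF \<alpha>(1)])
qed

lemma Nbhd_tt_1_tt_2_disjoint: "Nbhd (tt 1 @ [False]) \<inter> Nbhd (tt 2 @ [False]) = {}"
proof -
  have "psi 1 = [False]" "psi 2 = [True]" by (simp_all add: psi_def)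
  then have "(tt 1 @ [False]) ! 0 = False" "(tt 2 @ [False]) ! 0 = True" by (simp_all add: tt_def)
  moreover have "\<alpha> 0 = t ! 0" if "\<alpha> \<in> Nbhd t" "t \<noteq> []" for \<alpha> t
    using that by (simp add: Nbhd_def)
  ultimately show ?thesis by (metis disjoint_iff snoc_eq_iff_butlast)
qed

lemma g_seq_butlast_eq:
  assumes "1 \<le> L" "sorted_wrt (<) s" "length s = L + 1"
    and "g_seq L s \<alpha> \<noteq> None" "g_seq L (butlast s) \<alpha> \<noteq> None"
  shows "g_seq L s \<alpha> = g_seq L (butlast s) \<alpha>"
proof -
  obtain s' b where s: "s = s' @ [b]"
    using assms(3) by (metis append_butlast_last_id list.size(3) add_is_0 zero_neq_one)
  have \<alpha>: "\<alpha> \<in> Nbhd (tt b @ [False])" using assms(4) s g_seq_snoc_domain by blast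
  obtain \<beta>1 \<beta>2 where \<beta>1: "g_seq L s' (g L b \<alpha>) = Some \<beta>1" and \<beta>2: "g_seq L s' \<alpha> = Some \<beta>2"
    using assms(4,5) by (auto simp: s g_seq_snoc[OF \<alpha>])
  have "s \<noteq> [0, 1, 2]"
  proof
    assume "s = [0, 1, 2]"
    then have "\<alpha> \<in> Nbhd (tt 2 @ [False])" "\<alpha> \<in> Nbhd (tt 1 @ [False])"
      using assms(4,5) g_seq_snoc_domain[of L "[0, 1]" 2] g_seq_snoc_domain[of L "[0]" 1] by auto
    then show False using Nbhd_tt_1_tt_2_disjoint by blast
  qed
  have "\<beta>1 k = \<beta>2 k" for k
  proof (cases "source_coord L s' k")
    case (Some p)
    then have "p \<notin> S b"
      using source_coord_in_S_imp_012[OF assms(1) _ _ Some] assms(2,3) \<open>s \<noteq> [0, 1, 2]\<close> by (auto simp: s)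
    then show ?thesis using g_seq_apply[OF \<beta>1] g_seq_apply[OF \<beta>2] Some g_notin_S by simp
  qed (simp add: g_seq_apply[OF \<beta>1] g_seq_apply[OF \<beta>2])
  then show ?thesis using \<beta>1 \<beta>2 by (simp add: s g_seq_snoc[OF \<alpha>] fun_eq_iff)
qed

section \<open>Cantor space\<close>

definition cylinder :: "(nat \<Rightarrow> bool) \<Rightarrow> nat \<Rightarrow> (nat \<Rightarrow> bool) set" where
  "cylinder \<alpha> n = {\<beta>. \<forall>i<n. \<beta> i = \<alpha> i}"

lemma topspace_cantor [simp]: "topspace cantor = UNIV"
  by (simp add: cantor_def PiE_UNIV_domain)

lemma openin_cantor_iff: "openin cantor A \<longleftrightarrow> (\<forall>\<alpha>\<in>A. \<exists>n. cylinder \<alpha> n \<subseteq> A)"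
proof
  assume "openin cantor A"
  then have h: "\<forall>x\<in>A. \<exists>U. finite {i. U i \<noteq> UNIV} \<and> x \<in> Pi UNIV U \<and> Pi UNIV U \<subseteq> A"
    unfolding cantor_def openin_product_topology_alt by (simp add: PiE_UNIV_domain)
  show "\<forall>\<alpha>\<in>A. \<exists>n. cylinder \<alpha> n \<subseteq> A"
  proof
    fix \<alpha> assume "\<alpha> \<in> A"
    then obtain U where U: "finite {i. U i \<noteq> UNIV}" "\<alpha> \<in> Pi UNIV U" "Pi UNIV U \<subseteq> A"
      using h by blast
    obtain n where "{i. U i \<noteq> UNIV} \<subseteq> {..<n}" using finite_nat_bounded[OF U(1)] by blast
    then have "cylinder \<alpha> n \<subseteq> Pi UNIV U" using U(2) by (force simp: cylinder_def)
    then show "\<exists>n. cylinder \<alpha> n \<subseteq> A" using U(3) by blast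
  qed
next
  assume h: "\<forall>\<alpha>\<in>A. \<exists>n. cylinder \<alpha> n \<subseteq> A"
  show "openin cantor A"
    unfolding cantor_def openin_product_topology_alt
  proof (simp add: PiE_UNIV_domain, intro ballI)
    fix \<alpha> assume "\<alpha> \<in> A"
    then obtain n where n: "cylinder \<alpha> n \<subseteq> A" using h by blast
    define U where "U i = (if i < n then {\<alpha> i} else UNIV)" for i
    have "finite {i. U i \<noteq> UNIV}" by (rule finite_subset[of _ "{..<n}"]) (auto simp: U_def)
    moreover have "\<alpha> \<in> Pi UNIV U" by (simp add: U_def)
    moreover have "Pi UNIV U = cylinder \<alpha> n" by (auto simp: U_def cylinder_def Pi_def)
    ultimately show "\<exists>U. finite {i. U i \<noteq> UNIV} \<and> \<alpha> \<in> Pi UNIV U \<and> Pi UNIV U \<subseteq> A"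
      using n by blast
  qed
qed

lemma clopen_if_finitely_determined:
  assumes "\<And>\<alpha> \<beta>. \<forall>i<N. \<alpha> i = \<beta> i \<Longrightarrow> \<alpha> \<in> A \<Longrightarrow> \<beta> \<in> A"
  shows "openin cantor A" "closedin cantor A"
proof -
  have "cylinder \<alpha> N \<subseteq> A" if "\<alpha> \<in> A" for \<alpha>
    using that by (auto simp: cylinder_def intro: assms[of \<alpha>])
  then show "openin cantor A" by (auto simp: openin_cantor_iff)
  have "cylinder \<alpha> N \<subseteq> UNIV - A" if "\<alpha> \<notin> A" for \<alpha>
    using assms[of _ \<alpha>] that by (auto simp: cylinder_def)
  then show "closedin cantor A" by (auto simp: closedin_def openin_cantor_iff)
qed

lemma cantor_dim_le_0: "cantor dim_le 0"
  unfolding dimension_le_0_neighbourhood_base_of_clopen neighbourhood_base_of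
proof (intro allI impI)
  fix W x assume "openin cantor W \<and> x \<in> W"
  then obtain n where "cylinder x n \<subseteq> W" unfolding openin_cantor_iff by blast
  moreover have "openin cantor (cylinder x n)" "closedin cantor (cylinder x n)"
    by (rule clopen_if_finitely_determined[of n], simp add: cylinder_def)+
  ultimately show "\<exists>U V. openin cantor U \<and> (closedin cantor V \<and> openin cantor V) \<and>
      x \<in> U \<and> U \<subseteq> V \<and> V \<subseteq> W"
    by (intro exI[of _ "cylinder x n"]) (auto simp: cylinder_def)
qed

lemma perfect_top_cantor: "perfect_top cantor"
  unfolding perfect_top_def
proof (rule set_eqI)
  fix \<alpha> :: "nat \<Rightarrow> bool"
  have "\<alpha> \<in> cantor derived_set_of topspace cantor"
    unfolding in_derived_set_of
  proof (intro conjI allI impI)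
    fix T assume "\<alpha> \<in> T \<and> openin cantor T"
    then obtain n where "cylinder \<alpha> n \<subseteq> T" unfolding openin_cantor_iff by blast
    moreover have "\<alpha>(n := \<not> \<alpha> n) \<in> cylinder \<alpha> n" by (simp add: cylinder_def)
    moreover have "\<alpha>(n := \<not> \<alpha> n) \<noteq> \<alpha>" by (metis fun_upd_same)
    ultimately show "\<exists>y. y \<noteq> \<alpha> \<and> y \<in> topspace cantor \<and> y \<in> T" by auto
  qed simp
  then show "\<alpha> \<in> cantor derived_set_of topspace cantor \<longleftrightarrow> \<alpha> \<in> topspace cantor" by simp
qed

lemma separable_space_cantor: "separable_space cantor"
  unfolding separable_space_def
proof (intro exI conjI)
  define e where "e w = (\<lambda>i. i < length w \<and> w ! i)" for w :: "bool list"
  have "\<alpha> \<in> cantor closure_of range e" for \<alpha>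
    unfolding in_closure_of
  proof (intro conjI allI impI)
    fix T assume "\<alpha> \<in> T \<and> openin cantor T"
    then obtain n where "cylinder \<alpha> n \<subseteq> T" unfolding openin_cantor_iff by blast
    moreover have "e (map \<alpha> [0..<n]) \<in> cylinder \<alpha> n" by (simp add: e_def cylinder_def)
    ultimately show "\<exists>y. y \<in> range e \<and> y \<in> T" by blast
  qed simp
  then show "cantor closure_of range e = topspace cantor" by auto
qed simp_all

lemma Polish_space_cantor: "Polish_space cantor"
proof -
  have "completely_metrizable_space cantor"
    by (simp add: cantor_def completely_metrizable_space_product_topology
        completely_metrizable_space_discrete_topology)
  then show ?thesis by (simp add: Polish_space_def separable_space_cantor)
qed

lemma length_bin_tail: "length (bin_tail m) \<le> m"
proof (induction m rule: bin_tail.induct)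
  case (1 m)
  show ?case
  proof (cases "m \<le> 1")
    case False
    then have "length (bin_tail m) = length (bin_tail (m div 2)) + 1"
      by (subst bin_tail.simps) simp
    then show ?thesis using 1 False by simp
  qed (subst bin_tail.simps, simp)
qed

lemma bin_tail_double: "1 \<le> m \<Longrightarrow> bin_tail (2 * m + of_bool b) = bin_tail m @ [b]"
  by (subst bin_tail.simps) auto

lemma surj_psi: "surj psi"
proof -
  have "\<exists>n. psi n = w" for w
  proof (induction w rule: rev_induct)
    case Nil
    have "psi 0 = []" by (simp add: psi_def)
    then show ?case ..
  next
    case (snoc b w)
    then obtain n where "psi n = w" ..
    then have "psi (2 * n + 1 + of_bool b) = w @ [b]"
      using bin_tail_double[of "Suc n" b] by (simp add: psi_def)
    then show ?case ..
  qed
  then show ?thesis by (metis surjI)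
qed

lemma length_tt: "length (tt n) = 2 ^ q n"
proof -
  have "length (psi n) \<le> Suc n" unfolding psi_def by (rule length_bin_tail)
  also have "Suc n \<le> 2 ^ n" by (induction n) auto
  also have "(2::nat) ^ n \<le> 2 ^ q n" using strict_mono_imp_increasing[OF strict_mono_q] by simp
  finally show ?thesis by (simp add: tt_def)
qed

lemma Nbhd_tt_iff:
  "\<alpha> \<in> Nbhd (tt n @ [c]) \<longleftrightarrow> (\<forall>i < 2 ^ q n. \<alpha> i = tt n ! i) \<and> \<alpha> (2 ^ q n) = c"
  by (auto simp: Nbhd_def length_tt nth_append less_Suc_eq)

section \<open>The maps \<open>g_n\<close> and their domains\<close>

lemma D_subset_Nbhd: "D L n \<subseteq> Nbhd (tt n @ [False])"
  by (auto simp: D_def)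

lemma D_finitely_determined:
  assumes "\<forall>i < 2 ^ q n * 3 ^ Suc n + 1. \<alpha> i = \<beta> i" "\<alpha> \<in> D L n"
  shows "\<beta> \<in> D L n"
proof -
  have agree: "\<alpha> (2 ^ q n * j) = \<beta> (2 ^ q n * j)" if "j \<le> 3 ^ Suc n" for j
    using assms(1) that by (simp add: less_Suc_eq_le)
  have "\<alpha> i = \<beta> i" if "i \<le> 2 ^ q n" for i
  proof -
    have "(2::nat) ^ q n \<le> 2 ^ q n * 3 ^ Suc n" by simp
    then have "i < 2 ^ q n * 3 ^ Suc n + 1" using that by linarith
    then show ?thesis using assms(1) by blast
  qed
  moreover have "\<alpha> \<in> Nbhd (tt n @ [False])" using assms(2) D_subset_Nbhd by blast
  ultimately have "\<beta> \<in> Nbhd (tt n @ [False])" by (simp add: Nbhd_tt_iff)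
  moreover have "(3::nat) ^ m \<le> 3 ^ Suc n" if "m \<le> Suc n" for m
    using that by (rule power_increasing) simp
  ultimately show ?thesis using assms(2) agree by (auto simp: D_def)
qed

lemma D_clopen: "openin cantor (D L n)" "closedin cantor (D L n)"
  using clopen_if_finitely_determined[of "2 ^ q n * 3 ^ Suc n + 1" "D L n"] D_finitely_determined
  by blast+

lemma continuous_map_g: "continuous_map cantor cantor (g L n)"
  unfolding cantor_def continuous_map_componentwise_UNIV
proof
  fix k
  show "continuous_map (product_topology (\<lambda>_. discrete_topology UNIV) UNIV)
      (discrete_topology UNIV) (\<lambda>x. g L n x k)"
  proof (cases "k = 2 ^ q n")
    case False
    then have "(\<lambda>x. g L n x k) = (\<lambda>x. x (theta_n L n k))" by (simp add: g_def)
    then show ?thesis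
      using continuous_map_product_projection[of "theta_n L n k" UNIV "\<lambda>_. discrete_topology UNIV"]
      by simp
  qed (simp add: g_def)
qed

definition g_lift :: "nat \<Rightarrow> nat \<Rightarrow> (nat \<Rightarrow> bool) \<Rightarrow> (nat \<Rightarrow> bool) \<Rightarrow> (nat \<Rightarrow> bool)" where
  "g_lift L n \<alpha> \<beta>' = (\<lambda>p. if \<exists>k. k \<noteq> 2 ^ q n \<and> theta_n L n k = p
      then \<beta>' (THE k. k \<noteq> 2 ^ q n \<and> theta_n L n k = p) else \<alpha> p)"

lemma g_lift_theta_n: "k \<noteq> 2 ^ q n \<Longrightarrow> g_lift L n \<alpha> \<beta>' (theta_n L n k) = \<beta>' k"
proof -
  assume "k \<noteq> 2 ^ q n"
  then have "(THE k'. k' \<noteq> 2 ^ q n \<and> theta_n L n k' = theta_n L n k) = k"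
    using inj_theta_n by (auto simp: inj_eq)
  then show ?thesis using \<open>k \<noteq> 2 ^ q n\<close> by (auto simp: g_lift_def)
qed

lemma g_g_lift: "\<beta>' (2 ^ q n) \<Longrightarrow> g L n (g_lift L n \<alpha> \<beta>') = \<beta>'"
  by (auto simp: g_def g_lift_theta_n)

lemma g_lift_agrees:
  assumes "\<beta>' \<in> cylinder (g L n \<alpha>) N" "p < N"
  shows "g_lift L n \<alpha> \<beta>' p = \<alpha> p"
proof (cases "\<exists>k. k \<noteq> 2 ^ q n \<and> theta_n L n k = p")
  case True
  then obtain k where k: "k \<noteq> 2 ^ q n" "theta_n L n k = p" by blast
  then have "k < N" using le_theta_n[of k L n] assms(2) by simp
  then show ?thesis using assms(1) k g_lift_theta_n[OF k(1)] by (auto simp: cylinder_def g_def)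
qed (auto simp: g_lift_def)

lemma openin_g_image:
  assumes "openin cantor T"
  shows "openin cantor (g L n ` (T \<inter> D L n))"
  unfolding openin_cantor_iff
proof
  fix y assume "y \<in> g L n ` (T \<inter> D L n)"
  then obtain \<alpha> where \<alpha>: "\<alpha> \<in> T" "\<alpha> \<in> D L n" "y = g L n \<alpha>" by blast
  obtain N1 where N1: "cylinder \<alpha> N1 \<subseteq> T" using assms \<alpha>(1) unfolding openin_cantor_iff by blast
  define N where "N = max N1 (2 ^ q n * 3 ^ Suc n + 1) + 2 ^ q n + 1"
  have "cylinder y N \<subseteq> g L n ` (T \<inter> D L n)"
  proof
    fix \<beta>' assume \<beta>': "\<beta>' \<in> cylinder y N"
    have "2 ^ q n < N" by (simp add: N_def)
    then have "\<beta>' (2 ^ q n)" using \<beta>' \<alpha>(3) by (simp add: cylinder_def g_def)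
    have agree: "g_lift L n \<alpha> \<beta>' p = \<alpha> p" if "p < N" for p
      using g_lift_agrees \<beta>' \<alpha>(3) that by blast
    then have "g_lift L n \<alpha> \<beta>' \<in> T" using N1 by (auto simp: cylinder_def N_def)
    moreover have "g_lift L n \<alpha> \<beta>' \<in> D L n"
      using D_finitely_determined[OF _ \<alpha>(2)] agree by (simp add: N_def)
    ultimately show "\<beta>' \<in> g L n ` (T \<inter> D L n)"
      using g_g_lift[of \<beta>' n L \<alpha>] \<open>\<beta>' (2 ^ q n)\<close> by (metis IntI image_eqI)
  qed
  then show "\<exists>m. cylinder y m \<subseteq> g L n ` (T \<inter> D L n)" by blast
qed

lemma partial_cont_open_map_g: "partial_cont_open_map cantor (D L n) (g L n)"
proof -
  have cont: "continuous_map (subtopology cantor (D L n)) cantor (g L n)"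
    using continuous_map_g continuous_map_from_subtopology by blast
  have "open_map (subtopology cantor (D L n)) cantor (g L n)"
    unfolding open_map_def openin_subtopology using openin_g_image by blast
  moreover have "openin cantor (g L n ` D L n)" using openin_g_image[OF openin_topspace[of cantor]] by simp
  moreover have "compact_space cantor"
    by (simp add: cantor_def compact_space_product_topology compact_space_discrete_topology)
  then have "compactin cantor (D L n)" using D_clopen(2) by (rule closedin_compact_space)
  then have "compactin (subtopology cantor (D L n)) (D L n)" by (simp add: compactin_subtopology)
  then have "compactin cantor (g L n ` D L n)" using cont by (rule image_compactin)
  then have "closedin cantor (g L n ` D L n)"
    by (simp add: compactin_imp_closedin cantor_def Hausdorff_space_product_topology)
  ultimately show ?thesis unfolding partial_cont_open_map_def using D_clopen cont by blast
qed

lemma uncountable_cantor: "uncountable (UNIV :: (nat \<Rightarrow> bool) set)"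
proof
  assume "countable (UNIV :: (nat \<Rightarrow> bool) set)"
  then obtain f :: "nat \<Rightarrow> nat \<Rightarrow> bool" where "range f = UNIV"
    using uncountable_def by blast
  then obtain m where "f m = (\<lambda>n. \<not> f n n)" by (metis UNIV_I imageE)
  then show False by metis
qed

lemma diagonal_notin_graph: "(\<alpha>, \<alpha>) \<notin> graph_on (D L n) (g L n)"
proof
  assume "(\<alpha>, \<alpha>) \<in> graph_on (D L n) (g L n)"
  then have "\<alpha> \<in> D L n" "g L n \<alpha> = \<alpha>" by (auto simp: graph_on_def)
  then have "\<not> \<alpha> (2 ^ q n)" using D_subset_Nbhd Nbhd_tt_iff by blast
  moreover have "g L n \<alpha> (2 ^ q n)" by (simp add: g_def)
  ultimately show False using \<open>g L n \<alpha> = \<alpha>\<close> by simp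
qed
lemma diagonal_in_closure_graphs:
  "(\<alpha>, \<alpha>) \<in> prod_topology cantor cantor closure_of (\<Union>n. graph_on (D L n) (g L n))"
  unfolding in_closure_of
proof (intro conjI allI impI)
  fix T assume "(\<alpha>, \<alpha>) \<in> T \<and> openin (prod_topology cantor cantor) T"
  then obtain U V where UV: "openin cantor U" "openin cantor V" "\<alpha> \<in> U" "\<alpha> \<in> V" "U \<times> V \<subseteq> T"
    unfolding openin_prod_topology_alt by blast
  then obtain N1 N2 where N: "cylinder \<alpha> N1 \<subseteq> U" "cylinder \<alpha> N2 \<subseteq> V"
    unfolding openin_cantor_iff by meson
  define N where "N = N1 + N2"
  obtain n where n: "psi n = map \<alpha> [0..<N]" using surj_psi by (metis surj_def)
  have "length (psi n) \<le> length (tt n)" by (simp add: tt_def)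
  then have "N \<le> 2 ^ q n" using n length_tt[of n] by simp
  define \<beta> where "\<beta> p = (if p < 2 ^ q n then tt n ! p else \<exists>m. p = 2 ^ q n * 3 ^ m \<and> odd m)" for p
  have \<beta>_pow3: "\<beta> (2 ^ q n * 3 ^ m) = odd m" for m
    using le_less_trans[of "2 ^ q n" "2 ^ q n * 3 ^ m" "2 ^ q n"] by (auto simp: \<beta>_def)
  have "\<beta> \<in> Nbhd (tt n @ [False])"
    unfolding Nbhd_tt_iff using \<beta>_pow3[of 0] by (simp add: \<beta>_def)
  moreover have "\<beta> (2 ^ q n * (3 * 3 ^ m)) = even m" for m using \<beta>_pow3[of "Suc m"] by simp
  ultimately have "\<beta> \<in> D L n" using \<beta>_pow3 by (simp add: D_def)
  have agree: "\<beta> i = \<alpha> i" "g L n \<beta> i = \<alpha> i" if "i < N" for i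
  proof -
    have "i < 2 ^ q n" using that \<open>N \<le> 2 ^ q n\<close> by simp
    moreover have "i < length (psi n)" using that n by simp
    ultimately show "\<beta> i = \<alpha> i" using n that by (simp add: \<beta>_def tt_def nth_append)
    have "i \<notin> S n" using \<open>i < 2 ^ q n\<close> S_ge by fastforce
    then show "g L n \<beta> i = \<alpha> i" using \<open>\<beta> i = \<alpha> i\<close> g_notin_S by simp
  qed
  have "(\<beta>, g L n \<beta>) \<in> U \<times> V" using N agree by (auto simp: cylinder_def N_def)
  moreover have "(\<beta>, g L n \<beta>) \<in> (\<Union>n. graph_on (D L n) (g L n))"
    using \<open>\<beta> \<in> D L n\<close> by (auto simp: graph_on_def)
  ultimately show "\<exists>y. y \<in> (\<Union>n. graph_on (D L n) (g L n)) \<and> y \<in> T" using UV(5) by blast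
qed simp

lemma g_not_countable_to_one:
  assumes "openin cantor U" "U \<noteq> {}" "U \<subseteq> D L n"
  shows "\<not> (\<forall>y. countable {x \<in> U. g L n x = y})"
proof
  assume countable_fibres: "\<forall>y. countable {x \<in> U. g L n x = y}"
  obtain \<alpha> where "\<alpha> \<in> U" using assms(2) by blast
  then obtain N where N: "cylinder \<alpha> N \<subseteq> U" using assms(1) unfolding openin_cantor_iff by blast
  define pos where "pos j = 2 ^ q n * (6 * (N + j) + 4)" for j
  have inj_pos: "inj pos" by (rule injI) (simp add: pos_def)
  have N_less_pos: "N < pos j" for j
  proof -
    have "N < 6 * (N + j) + 4" by simp
    also have "\<dots> \<le> pos j" by (simp add: pos_def)
    finally show ?thesis .
  qed
  define h where "h c = (\<lambda>p. if p \<in> range pos then c (inv pos p) else \<alpha> p)" for c :: "nat \<Rightarrow> bool"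
  have "inj h"
  proof (rule injI)
    fix c c' assume "h c = h c'"
    then have "h c (pos j) = h c' (pos j)" for j by simp
    then show "c = c'" using inj_pos by (auto simp: h_def fun_eq_iff)
  qed
  have "range h \<subseteq> {x \<in> U. g L n x = g L n \<alpha>}"
  proof safe
    fix c
    have "i \<notin> range pos" if "i < N" for i using N_less_pos that by (metis imageE less_asym)
    then have "h c \<in> cylinder \<alpha> N" by (auto simp: cylinder_def h_def)
    then show "h c \<in> U" using N by blast
    have "theta_n L n k \<noteq> pos j" for k j
      unfolding pos_def by (rule theta_n_ne_6_mult_plus_4)
    then have "theta_n L n k \<notin> range pos" for k by blast
    then show "g L n (h c) = g L n \<alpha>" by (auto simp: g_def h_def)
  qed
  then have "countable (range h)" using countable_fibres countable_subset by blast
  then show False using uncountable_cantor countable_image_inj_on \<open>inj h\<close> by blast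
qed

theorem strongly_complex_situation_g: "strongly_complex_situation cantor (D L) (g L)"
  unfolding strongly_complex_situation_def
proof (intro conjI allI impI)
  show "(\<lambda>x. (x, x)) ` topspace cantor \<subseteq> prod_topology cantor cantor closure_of
      (\<Union>n. graph_on (D L n) (g L n)) - (\<Union>n. graph_on (D L n) (g L n))"
    using diagonal_in_closure_graphs diagonal_notin_graph by blast
qed (auto simp: cantor_dim_le_0 perfect_top_cantor Polish_space_cantor partial_cont_open_map_g
    g_not_countable_to_one)

theorem lemma5p2:
  fixes L :: nat
  assumes "L \<ge> 1"
  shows "strongly_complex_situation cantor (D L) (g L) \<and>
    (\<forall>s \<alpha>. sorted_wrt (<) s \<and> 2 \<le> length s \<and> length s \<le> L \<and>
           \<alpha> \<in> D L (last s) \<and> g_seq L s \<alpha> \<noteq> None \<and> g_seq L (butlast s) \<alpha> \<noteq> None \<longrightarrow>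
           g_seq L s \<alpha> \<noteq> g_seq L (butlast s) \<alpha>) \<and>
    (\<forall>s \<alpha>. sorted_wrt (<) s \<and> length s = L + 1 \<and>
           g_seq L s \<alpha> \<noteq> None \<and> g_seq L (butlast s) \<alpha> \<noteq> None \<longrightarrow>
           g_seq L s \<alpha> = g_seq L (butlast s) \<alpha>)"
  using strongly_complex_situation_g g_seq_butlast_neq g_seq_butlast_eq[OF assms] by blast

end
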